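(* Fix an integer $k\geq1$ and $V=\{0,\ldots,k\}$. A Boolean function $\varphi$ on $V$ is fragmentable if and only if $\mathrm{eul}(\varphi)=0$.
   Context: A valuation is a subset $\nu\subseteq V$; $\nu^{(l)}$ is $\nu$ with membership of $l$ flipped. A Boolean function on $V$ is a map $\varphi:2^V\to\{\text{false},\text{true}\}$; $\mathrm{eul}(\varphi)=\sum_{\nu:\varphi(\nu)=\text{true}}(-1)^{|\nu|}$. $\varphi$ is degenerate if there is $l\in V$ with $\varphi(\nu)=\varphi(\nu^{(l)})$ for all $\nu$. Two functions are disjoint if no valuation satisfies both. A $\neg$-$\vee$-template is a Boolean circuit all of whose internal gates are $\neg$- or $\vee$-gates (a single leaf is allowed); its leaves $l_0,\ldots,l_n$ are holes. $T[\varphi_0,\ldots,\varphi_n]$ is the function obtained by substituting $\varphi_i$ for $l_i$; it is deterministic if, for every $\vee$-gate of the template, any two distinct inputs compute disjoint functions. $\varphi$ is fragmentable if there exist a $\neg$-$\vee$-template $T$ and degenerate functions $\varphi_0,\ldots,\varphi_n$ (one per hole) such that $T[\varphi_0,\ldots,\varphi_n]$ is deterministic and equivalent to $\varphi$. *)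

theory Defs
  imports Main
begin

text \<open>Valuations over V are sets nu with nu a subset of V; a Boolean function on V is
  represented by a predicate on nat sets, of which only the values on subsets of V matter.\<close>

type_synonym bfun = "nat set \<Rightarrow> bool"

definition flip :: "nat set \<Rightarrow> nat \<Rightarrow> nat set" where
  "flip \<nu> l = (if l \<in> \<nu> then \<nu> - {l} else insert l \<nu>)"

definition eul :: "nat set \<Rightarrow> bfun \<Rightarrow> int" where
  "eul V \<phi> = (\<Sum>\<nu> \<in> {\<nu>. \<nu> \<subseteq> V \<and> \<phi> \<nu>}. (-1) ^ card \<nu>)"

definition degenerate :: "nat set \<Rightarrow> bfun \<Rightarrow> bool" where
  "degenerate V \<phi> = (\<exists>l \<in> V. \<forall>\<nu>. \<nu> \<subseteq> V \<longrightarrow> \<phi> \<nu> = \<phi> (flip \<nu> l))"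

definition disjoint_fun :: "nat set \<Rightarrow> bfun \<Rightarrow> bfun \<Rightarrow> bool" where
  "disjoint_fun V \<phi> \<psi> = (\<forall>\<nu>. \<nu> \<subseteq> V \<longrightarrow> \<not> (\<phi> \<nu> \<and> \<psi> \<nu>))"

definition equiv_fun :: "nat set \<Rightarrow> bfun \<Rightarrow> bfun \<Rightarrow> bool" where
  "equiv_fun V \<phi> \<psi> = (\<forall>\<nu>. \<nu> \<subseteq> V \<longrightarrow> \<phi> \<nu> = \<psi> \<nu>)"

text \<open>A negation-disjunction template with its holes already filled: leaves carry the
  substituted functions, internal gates are negations or disjunctions of arbitrary fan-in.
  (A circuit with shared subcircuits can be unfolded into such a tree.)\<close>

datatype 'a tmpl = Hole 'a | Neg "'a tmpl" | Or "'a tmpl list"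

fun holes :: "'a tmpl \<Rightarrow> 'a set" where
  "holes (Hole a) = {a}"
| "holes (Neg t) = holes t"
| "holes (Or ts) = (\<Union>t \<in> set ts. holes t)"

fun sem :: "bfun tmpl \<Rightarrow> bfun" where
  "sem (Hole \<phi>) = \<phi>"
| "sem (Neg t) = (\<lambda>\<nu>. \<not> sem t \<nu>)"
| "sem (Or ts) = (\<lambda>\<nu>. \<exists>t \<in> set ts. sem t \<nu>)"

fun deterministic :: "nat set \<Rightarrow> bfun tmpl \<Rightarrow> bool" where
  "deterministic V (Hole \<phi>) = True"
| "deterministic V (Neg t) = deterministic V t"
| "deterministic V (Or ts) =
     ((\<forall>t \<in> set ts. deterministic V t) \<and>
      (\<forall>i < length ts. \<forall>j < length ts. i \<noteq> j \<longrightarrow>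
          disjoint_fun V (sem (ts ! i)) (sem (ts ! j))))"

definition fragmentable :: "nat set \<Rightarrow> bfun \<Rightarrow> bool" where
  "fragmentable V \<phi> = (\<exists>T. (\<forall>\<psi> \<in> holes T. degenerate V \<psi>) \<and> deterministic V T
                             \<and> equiv_fun V (sem T) \<phi>)"

end

theory Submission
  imports Defs
begin

text \<open>
  The Euler characteristic is additive on disjoint disjunctions, sends a negation to
  eul(true) minus the original, and vanishes on degenerate functions (including the constant
  true), because flipping an inert variable is a sign-reversing involution on the satisfying
  valuations. Hence every deterministic template over degenerate functions has Euler
  characteristic 0.

  Conversely, the fragmentable sets of valuations contain every edge {\<nu>, \<nu>^(l)} of the
  cube and are closed under complement and disjoint union, hence under differences.
  Splicing the edges of a path \<nu>, \<nu>1, \<nu>2, \<mu> as ({\<nu>, \<nu>1} \<union> {\<nu>2, \<mu>}) - {\<nu>1, \<nu>2}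
  shows by induction that every pair {\<nu>, \<mu>} at odd Hamming distance is fragmentable.
  A set of valuations with Euler characteristic 0 has as many even as odd members, so it
  is a disjoint union of such pairs.
\<close>

lemma flip_flip [simp]: "flip (flip \<nu> l) l = \<nu>"
  unfolding flip_def by auto

lemma flip_neq [simp]: "flip \<nu> l \<noteq> \<nu>"
  unfolding flip_def by auto

lemma flip_eq_iff: "flip \<nu> l = \<mu> \<longleftrightarrow> \<nu> = flip \<mu> l"
  by (metis flip_flip)

lemma flip_subset: "\<nu> \<subseteq> V \<Longrightarrow> l \<in> V \<Longrightarrow> flip \<nu> l \<subseteq> V"
  unfolding flip_def by auto

lemma neg_one_power_card_flip:
  assumes "finite \<nu>"
  shows "(-1::int) ^ card (flip \<nu> l) = - ((-1) ^ card \<nu>)"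
proof (cases "l \<in> \<nu>")
  case True
  then have "card \<nu> = Suc (card (flip \<nu> l))"
    using assms by (simp add: flip_def card_Suc_Diff1 del: card_Diff_insert)
  then show ?thesis
    by simp
next
  case False
  then show ?thesis
    using assms by (simp add: flip_def)
qed

lemma sym_diff_flip: "l \<in> sym_diff \<nu> \<mu> \<Longrightarrow> sym_diff (flip \<nu> l) \<mu> = sym_diff \<nu> \<mu> - {l}"
  unfolding flip_def by auto

lemma card_sym_diff_flip:
  assumes "finite (sym_diff \<nu> \<mu>)" and "l \<in> sym_diff \<nu> \<mu>"
  shows "Suc (card (sym_diff (flip \<nu> l) \<mu>)) = card (sym_diff \<nu> \<mu>)"
  using assms card.remove sym_diff_flip by metis

lemma sym_diff_eq_singleton:
  assumes "sym_diff \<nu> \<mu> = {l}"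
  shows "\<mu> = flip \<nu> l"
proof (rule set_eqI)
  fix x
  have "x \<in> sym_diff \<nu> \<mu> \<longleftrightarrow> x = l"
    using assms by simp
  then show "x \<in> \<mu> \<longleftrightarrow> x \<in> flip \<nu> l"
    unfolding flip_def by auto
qed

lemma card_sym_diff:
  assumes "finite A" "finite B"
  shows "card (sym_diff A B) + 2 * card (A \<inter> B) = card A + card B"
proof -
  have "card (sym_diff A B) = card (A - B) + card (B - A)"
    using assms by (intro card_Un_disjoint) auto
  moreover have "card A = card (A \<inter> B) + card (A - B)" "card B = card (B \<inter> A) + card (B - A)"
    using assms by (simp_all add: card_Int_Diff)
  ultimately show ?thesis
    by (simp add: Int_commute)
qed

lemma eul_cong: "equiv_fun V \<phi> \<psi> \<Longrightarrow> eul V \<phi> = eul V \<psi>"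
  unfolding equiv_fun_def eul_def by (intro arg_cong[where f = "sum _"]) auto

lemma eul_degenerate:
  assumes "finite V" and "degenerate V \<phi>"
  shows "eul V \<phi> = 0"
proof -
  obtain l where "l \<in> V" and \<phi>_flip: "\<And>\<nu>. \<nu> \<subseteq> V \<Longrightarrow> \<phi> \<nu> = \<phi> (flip \<nu> l)"
    using assms(2) unfolding degenerate_def by blast
  define A where "A = {\<nu>. \<nu> \<subseteq> V \<and> \<phi> \<nu>}"
  have flip_in_A: "flip \<nu> l \<in> A" if "\<nu> \<in> A" for \<nu>
    using that \<phi>_flip flip_subset[OF _ \<open>l \<in> V\<close>] unfolding A_def by blast
  have "(\<Sum>\<nu>\<in>A. - ((-1::int) ^ card \<nu>)) = (\<Sum>\<nu>\<in>A. (-1) ^ card \<nu>)"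
  proof (rule sum.reindex_bij_witness[where i = "\<lambda>\<nu>. flip \<nu> l" and j = "\<lambda>\<nu>. flip \<nu> l"])
    fix \<nu> assume "\<nu> \<in> A"
    then have "finite \<nu>"
      using assms(1) finite_subset unfolding A_def by blast
    then show "(-1::int) ^ card (flip \<nu> l) = - ((-1) ^ card \<nu>)"
      by (rule neg_one_power_card_flip)
  qed (use flip_in_A in simp_all)
  then have "(\<Sum>\<nu>\<in>A. (-1::int) ^ card \<nu>) = 0"
    unfolding sum_negf by linarith
  then show ?thesis
    by (simp add: eul_def A_def)
qed

lemma eul_disj:
  assumes "finite V" and "disjoint_fun V \<phi> \<psi>"
  shows "eul V (\<lambda>\<nu>. \<phi> \<nu> \<or> \<psi> \<nu>) = eul V \<phi> + eul V \<psi>"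
proof -
  let ?A = "{\<nu>. \<nu> \<subseteq> V \<and> \<phi> \<nu>}" and ?B = "{\<nu>. \<nu> \<subseteq> V \<and> \<psi> \<nu>}"
  have "{\<nu>. \<nu> \<subseteq> V \<and> (\<phi> \<nu> \<or> \<psi> \<nu>)} = ?A \<union> ?B"
    by auto
  moreover have "?A \<inter> ?B = {}"
    using assms(2) unfolding disjoint_fun_def by auto
  moreover have "finite ?A" and "finite ?B"
    using assms(1) by simp_all
  ultimately show ?thesis
    unfolding eul_def by (simp only: sum.union_disjoint)
qed

lemma eul_not:
  assumes "finite V"
  shows "eul V (\<lambda>\<nu>. \<not> \<phi> \<nu>) = eul V (\<lambda>_. True) - eul V \<phi>"
  using eul_disj[OF assms, of \<phi> "\<lambda>\<nu>. \<not> \<phi> \<nu>"] by (simp add: disjoint_fun_def)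

lemma disjoint_fun_commute: "disjoint_fun V \<phi> \<psi> \<longleftrightarrow> disjoint_fun V \<psi> \<phi>"
  unfolding disjoint_fun_def by blast

lemma deterministic_Or_Cons:
  "deterministic V (Or (t # ts)) \<longleftrightarrow>
     deterministic V t \<and> deterministic V (Or ts) \<and> (\<forall>u \<in> set ts. disjoint_fun V (sem t) (sem u))"
  by (simp add: All_less_Suc2 all_set_conv_all_nth disjoint_fun_commute) blast

lemma eul_sem_Or:
  assumes "finite V" and "deterministic V (Or ts)"
  shows "eul V (sem (Or ts)) = (\<Sum>t \<leftarrow> ts. eul V (sem t))"
  using assms(2)
proof (induction ts)
  case Nil
  then show ?case
    by (simp add: eul_def)
next
  case (Cons t ts)
  then have "deterministic V (Or ts)" and "disjoint_fun V (sem t) (sem (Or ts))"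
    unfolding deterministic_Or_Cons disjoint_fun_def by auto
  then show ?case
    using Cons.IH eul_disj[OF assms(1)] by simp
qed

lemma eul_sem_eq_0:
  assumes "finite V" and "V \<noteq> {}"
  shows "\<forall>\<psi> \<in> holes T. degenerate V \<psi> \<Longrightarrow> deterministic V T \<Longrightarrow> eul V (sem T) = 0"
proof (induction T)
  case (Hole \<psi>)
  then show ?case
    using eul_degenerate[OF assms(1)] by simp
next
  case (Neg T)
  have "degenerate V (\<lambda>_. True)"
    using assms(2) unfolding degenerate_def by auto
  then have "eul V (\<lambda>_. True) = 0"
    using eul_degenerate[OF assms(1)] by blast
  then show ?case
    using Neg eul_not[OF assms(1)] by simp
next
  case (Or ts)
  then have "(\<Sum>t \<leftarrow> ts. eul V (sem t)) = (\<Sum>t \<leftarrow> ts. 0)"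
    by (intro arg_cong[where f = sum_list]) simp
  then show ?case
    using Or.prems eul_sem_Or[OF assms(1)] by simp
qed

lemma fragmentable_imp_eul_eq_0:
  assumes "finite V" and "V \<noteq> {}" and "fragmentable V \<phi>"
  shows "eul V \<phi> = 0"
proof -
  obtain T where "\<forall>\<psi> \<in> holes T. degenerate V \<psi>" "deterministic V T" "equiv_fun V (sem T) \<phi>"
    using assms(3) unfolding fragmentable_def by blast
  then show ?thesis
    using eul_sem_eq_0[OF assms(1,2)] eul_cong by metis
qed

lemma fragmentable_cong:
  assumes "equiv_fun V \<phi> \<psi>" and "fragmentable V \<phi>"
  shows "fragmentable V \<psi>"
  using assms unfolding fragmentable_def equiv_fun_def by metis

lemma degenerate_imp_fragmentable: "degenerate V \<phi> \<Longrightarrow> fragmentable V \<phi>"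
  unfolding fragmentable_def by (intro exI[of _ "Hole \<phi>"]) (simp add: equiv_fun_def)

lemma fragmentable_False: "fragmentable V (\<lambda>_. False)"
  unfolding fragmentable_def by (intro exI[of _ "Or []"]) (simp add: equiv_fun_def)

lemma fragmentable_not:
  assumes "fragmentable V \<phi>"
  shows "fragmentable V (\<lambda>\<nu>. \<not> \<phi> \<nu>)"
proof -
  obtain T where "\<forall>\<psi> \<in> holes T. degenerate V \<psi>" "deterministic V T" "equiv_fun V (sem T) \<phi>"
    using assms unfolding fragmentable_def by blast
  then show ?thesis
    unfolding fragmentable_def by (intro exI[of _ "Neg T"]) (simp add: equiv_fun_def)
qed

lemma fragmentable_disj:
  assumes "disjoint_fun V \<phi> \<psi>" and "fragmentable V \<phi>" and "fragmentable V \<psi>"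
  shows "fragmentable V (\<lambda>\<nu>. \<phi> \<nu> \<or> \<psi> \<nu>)"
proof -
  obtain T where T: "\<forall>\<chi> \<in> holes T. degenerate V \<chi>" "deterministic V T" "equiv_fun V (sem T) \<phi>"
    using assms(2) unfolding fragmentable_def by blast
  obtain U where U: "\<forall>\<chi> \<in> holes U. degenerate V \<chi>" "deterministic V U" "equiv_fun V (sem U) \<psi>"
    using assms(3) unfolding fragmentable_def by blast
  have "disjoint_fun V (sem T) (sem U)"
    using assms(1) T(3) U(3) unfolding disjoint_fun_def equiv_fun_def by auto
  then have "deterministic V (Or [T, U])"
    using T(2) U(2) unfolding deterministic_Or_Cons by simp
  then show ?thesis
    unfolding fragmentable_def using T U
    by (intro exI[of _ "Or [T, U]"]) (auto simp: equiv_fun_def)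
qed

abbreviation fragmentable_set :: "nat set \<Rightarrow> nat set set \<Rightarrow> bool" where
  "fragmentable_set V S \<equiv> fragmentable V (\<lambda>\<nu>. \<nu> \<in> S)"

lemma fragmentable_set_Un:
  assumes "A \<inter> B = {}" and "fragmentable_set V A" and "fragmentable_set V B"
  shows "fragmentable_set V (A \<union> B)"
  using fragmentable_disj[of V "\<lambda>\<nu>. \<nu> \<in> A" "\<lambda>\<nu>. \<nu> \<in> B"] assms
  by (auto simp: disjoint_fun_def)

lemma fragmentable_set_Diff:
  assumes "B \<subseteq> A" and "fragmentable_set V A" and "fragmentable_set V B"
  shows "fragmentable_set V (A - B)"
proof -
  have "fragmentable_set V (- A)"
    using fragmentable_not[OF assms(2)] by simp
  then have "fragmentable_set V (- A \<union> B)"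
    using assms by (intro fragmentable_set_Un) auto
  then have "fragmentable_set V (- (- A \<union> B))"
    using fragmentable_not by (simp only: Compl_iff)
  moreover have "- (- A \<union> B) = A - B"
    by blast
  ultimately show ?thesis
    by simp
qed

lemma fragmentable_set_flip: "l \<in> V \<Longrightarrow> fragmentable_set V {\<nu>, flip \<nu> l}"
  by (rule degenerate_imp_fragmentable) (auto simp: degenerate_def flip_eq_iff intro!: bexI[of _ l])

lemma fragmentable_set_pair_trans:
  assumes "fragmentable_set V {a, b}" and "fragmentable_set V {b, c}" and "fragmentable_set V {c, d}"
    and "distinct [a, b, c, d]"
  shows "fragmentable_set V {a, d}"
proof -
  have "fragmentable_set V ({a, b} \<union> {c, d})"
    using assms by (intro fragmentable_set_Un) auto
  then have "fragmentable_set V ({a, b} \<union> {c, d} - {b, c})"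
    by (rule fragmentable_set_Diff[rotated]) (use assms(2) in auto)
  moreover have "{a, b} \<union> {c, d} - {b, c} = {a, d}"
    using assms(4) by auto
  ultimately show ?thesis
    by (simp only:)
qed

lemma fragmentable_set_two_flips:
  assumes "l \<in> V" and "l' \<in> V" and "fragmentable_set V {flip (flip \<nu> l) l', \<mu>}"
    and "distinct [\<nu>, flip \<nu> l, flip (flip \<nu> l) l', \<mu>]"
  shows "fragmentable_set V {\<nu>, \<mu>}"
  using fragmentable_set_flip[OF assms(1)] fragmentable_set_flip[OF assms(2)] assms(3,4)
  by (rule fragmentable_set_pair_trans)

lemma fragmentable_set_odd_pair:
  assumes "finite V" and "\<nu> \<subseteq> V" and "\<mu> \<subseteq> V" and "odd (card (sym_diff \<nu> \<mu>))"
  shows "fragmentable_set V {\<nu>, \<mu>}"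
  using assms(2-4)
proof (induction "card (sym_diff \<nu> \<mu>)" arbitrary: \<nu> rule: less_induct)
  case less
  have D: "sym_diff \<nu> \<mu> \<subseteq> V"
    using less.prems(1,2) by blast
  then have fin: "finite (sym_diff \<nu> \<mu>)"
    using assms(1) finite_subset by blast
  have "sym_diff \<nu> \<mu> \<noteq> {}"
    using less.prems(3) by (metis card.empty even_zero)
  then obtain l where l: "l \<in> sym_diff \<nu> \<mu>"
    by blast
  show ?case
  proof (cases "sym_diff \<nu> \<mu> = {l}")
    case True
    then show ?thesis
      using sym_diff_eq_singleton fragmentable_set_flip l D by (metis subsetD)
  next
    case False
    define \<nu>1 where "\<nu>1 = flip \<nu> l"
    have D1: "sym_diff \<nu>1 \<mu> = sym_diff \<nu> \<mu> - {l}"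
      unfolding \<nu>1_def using sym_diff_flip[OF l] .
    then obtain l' where l': "l' \<in> sym_diff \<nu>1 \<mu>"
      using False l by blast
    define \<nu>2 where "\<nu>2 = flip \<nu>1 l'"
    have "card (sym_diff \<nu>2 \<mu>) + 2 = card (sym_diff \<nu> \<mu>)"
      using card_sym_diff_flip[OF fin l] card_sym_diff_flip[OF _ l'] fin D1
      unfolding \<nu>1_def \<nu>2_def by simp
    then have smaller: "card (sym_diff \<nu>2 \<mu>) < card (sym_diff \<nu> \<mu>)"
      and odd2: "odd (card (sym_diff \<nu>2 \<mu>))"
      using less.prems(3) by presburger+
    have "l \<in> V" and "l' \<in> V"
      using l l' D1 D by blast+
    then have "\<nu>2 \<subseteq> V"
      unfolding \<nu>2_def \<nu>1_def using less.prems(1) by (intro flip_subset)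
    then have "fragmentable_set V {\<nu>2, \<mu>}"
      using less.hyps smaller less.prems(2) odd2 by blast
    moreover have "distinct [\<nu>, \<nu>1, \<nu>2, \<mu>]"
    proof -
      have "\<nu> \<noteq> \<nu>1" and "\<nu>1 \<noteq> \<nu>2"
        unfolding \<nu>1_def \<nu>2_def by (metis flip_neq)+
      moreover have "\<nu> \<noteq> \<nu>2"
        using smaller by blast
      moreover have "\<nu> \<noteq> \<mu>" and "\<nu>1 \<noteq> \<mu>" and "\<nu>2 \<noteq> \<mu>"
        using l l' odd2 by auto
      ultimately show ?thesis
        by auto
    qed
    ultimately show ?thesis
      unfolding \<nu>2_def \<nu>1_def by (rule fragmentable_set_two_flips[OF \<open>l \<in> V\<close> \<open>l' \<in> V\<close>])
  qed
qed

lemma even_odd_card_if_signed_sum_eq_0: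
  assumes "finite S" and "S \<noteq> {}" and "(\<Sum>\<nu>\<in>S. (-1::int) ^ card \<nu>) = 0"
  obtains \<nu> \<mu> where "\<nu> \<in> S" and "\<mu> \<in> S" and "even (card \<nu>)" and "odd (card \<mu>)"
proof -
  have "\<exists>\<nu>\<in>S. even (card \<nu>)"
  proof (rule ccontr)
    assume "\<not> ?thesis"
    then have "(\<Sum>\<nu>\<in>S. (-1::int) ^ card \<nu>) = (\<Sum>\<nu>\<in>S. -1)"
      by (intro sum.cong) auto
    then show False
      using assms by simp
  qed
  moreover have "\<exists>\<mu>\<in>S. odd (card \<mu>)"
  proof (rule ccontr)
    assume "\<not> ?thesis"
    then have "(\<Sum>\<nu>\<in>S. (-1::int) ^ card \<nu>) = (\<Sum>\<nu>\<in>S. 1)"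
      by (intro sum.cong) auto
    then show False
      using assms by simp
  qed
  ultimately show ?thesis
    using that by blast
qed

lemma fragmentable_set_if_signed_sum_eq_0:
  assumes "finite V" and "S \<subseteq> Pow V" and "(\<Sum>\<nu>\<in>S. (-1::int) ^ card \<nu>) = 0"
  shows "fragmentable_set V S"
  using assms(2,3)
proof (induction "card S" arbitrary: S rule: less_induct)
  case less
  have "finite S"
    using less.prems(1) assms(1) by (meson finite_Pow_iff finite_subset)
  show ?case
  proof (cases "S = {}")
    case True
    then show ?thesis
      using fragmentable_False by simp
  next
    case False
    then obtain \<nu> \<mu> where \<nu>: "\<nu> \<in> S" "even (card \<nu>)" and \<mu>: "\<mu> \<in> S" "odd (card \<mu>)"
      using even_odd_card_if_signed_sum_eq_0 \<open>finite S\<close> less.prems(2) by metis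
    then have "\<nu> \<noteq> \<mu>"
      by metis
    have "\<nu> \<subseteq> V" and "\<mu> \<subseteq> V"
      using \<nu>(1) \<mu>(1) less.prems(1) by auto
    then have "card (sym_diff \<nu> \<mu>) + 2 * card (\<nu> \<inter> \<mu>) = card \<nu> + card \<mu>"
      using assms(1) by (intro card_sym_diff) (auto intro: finite_subset)
    then have "odd (card (sym_diff \<nu> \<mu>))"
      using \<nu>(2) \<mu>(2) by presburger
    then have pair: "fragmentable_set V {\<nu>, \<mu>}"
      using fragmentable_set_odd_pair assms(1) \<open>\<nu> \<subseteq> V\<close> \<open>\<mu> \<subseteq> V\<close> by blast
    define S' where "S' = S - {\<nu>, \<mu>}"
    have "(\<Sum>\<nu>\<in>S. (-1::int) ^ card \<nu>) = (\<Sum>\<nu>\<in>S'. (-1) ^ card \<nu>) + (\<Sum>\<nu>\<in>{\<nu>, \<mu>}. (-1) ^ card \<nu>)"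
      unfolding S'_def using \<nu>(1) \<mu>(1) \<open>finite S\<close> by (intro sum.subset_diff) auto
    then have "(\<Sum>\<nu>\<in>S'. (-1::int) ^ card \<nu>) = 0"
      using less.prems(2) \<open>\<nu> \<noteq> \<mu>\<close> \<nu>(2) \<mu>(2) by simp
    moreover have "card S' < card S"
      unfolding S'_def using \<nu>(1) \<open>finite S\<close> by (intro psubset_card_mono) auto
    moreover have "S' \<subseteq> Pow V"
      unfolding S'_def using less.prems(1) by blast
    ultimately have "fragmentable_set V S'"
      using less.hyps by blast
    then have "fragmentable_set V (S' \<union> {\<nu>, \<mu>})"
      using pair by (intro fragmentable_set_Un) (auto simp: S'_def)
    moreover have "S' \<union> {\<nu>, \<mu>} = S"
      unfolding S'_def using \<nu>(1) \<mu>(1) by blast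
    ultimately show ?thesis
      by (simp only:)
  qed
qed

lemma eul_eq_0_imp_fragmentable:
  assumes "finite V" and "eul V \<phi> = 0"
  shows "fragmentable V \<phi>"
proof -
  have "fragmentable_set V {\<nu>. \<nu> \<subseteq> V \<and> \<phi> \<nu>}"
    using assms by (intro fragmentable_set_if_signed_sum_eq_0) (auto simp: eul_def)
  moreover have "equiv_fun V (\<lambda>\<nu>. \<nu> \<in> {\<nu>. \<nu> \<subseteq> V \<and> \<phi> \<nu>}) \<phi>"
    by (simp add: equiv_fun_def)
  ultimately show ?thesis
    using fragmentable_cong by blast
qed

theorem fragmentable_iff_eul_eq_0:
  assumes "finite V" and "V \<noteq> {}"
  shows "fragmentable V \<phi> \<longleftrightarrow> eul V \<phi> = 0"
  using assms fragmentable_imp_eul_eq_0 eul_eq_0_imp_fragmentable by blast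

theorem corollary5p4:
  fixes k :: nat and \<phi> :: "nat set \<Rightarrow> bool"
  assumes "k \<ge> 1"
  shows "fragmentable {0..k} \<phi> \<longleftrightarrow> eul {0..k} \<phi> = 0"
  by (rule fragmentable_iff_eul_eq_0) simp_all

end
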